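(* Let $L_w=BWB^\top\in\mathbb{R}^{n\times n}$ be the weighted Laplacian of a connected undirected graph with strictly positive edge weights. Let $i\neq j$ be two nodes and $E=e_i-e_j\in\mathbb{R}^n$ (a single port). Consider the single-input single-output system $\dot x=-L_w x + E d$, $y=E^\top x$, with $d\in\mathbb{R}$. Then the induced $\mathcal{L}_2$-gain ($\mathcal{H}_\infty$-norm) from $d$ to $y$ equals $$\gamma = R_{ij}(L_w) := (e_i-e_j)^\top L_w^{\dagger}(e_i-e_j),$$ the effective resistance between nodes $i$ and $j$.
   Context: A weighted undirected graph has nodes $v_1,\dots,v_n$, edges $\mathcal{E}_1,\dots,\mathcal{E}_m$ and weights $w_1,\dots,w_m$. With an arbitrary orientation of each edge, the incidence matrix $B\in\mathbb{R}^{n\times m}$ has $B_{ij}=1$ if edge $\mathcal{E}_j$ starts at $v_i$, $-1$ if it ends at $v_i$, $0$ otherwise; $W=\mathrm{diag}(w_1,\dots,w_m)$ and $L_w=BWB^\top$. $e_1,\dots,e_n$ is the canonical basis of $\mathbb{R}^n$ and $L_w^\dagger$ is the Moore–Penrose pseudoinverse. The induced $\mathcal{L}_2$-gain from $d$ to $y$ (with $x(0)=0$) is $\sup_{d\in L_2[0,\infty),d\ne0}\|y\|_2/\|d\|_2$, equivalently $\sup_{\omega\in\mathbb{R}}|\mathbb{G}(j\omega)|$ with $\mathbb{G}(s)=E^\top(sI+L_w)^{-1}E$. *)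

theory Defs
  imports "HOL-Analysis.Analysis"
begin

text \<open>Graph with node type 'n and edge type 'm (both finite). Each edge e is
  oriented arbitrarily from src e to tgt e (src e \<noteq> tgt e).\<close>

definition incidence :: "('m \<Rightarrow> 'n) \<Rightarrow> ('m \<Rightarrow> 'n) \<Rightarrow> real ^ 'm ^ 'n" where
  "incidence src tgt = (\<chi> i e. if i = src e then 1 else if i = tgt e then -1 else 0)"

definition weighted_laplacian ::
  "('m::finite \<Rightarrow> 'n::finite) \<Rightarrow> ('m \<Rightarrow> 'n) \<Rightarrow> ('m \<Rightarrow> real) \<Rightarrow> real ^ 'n ^ 'n" where
  "weighted_laplacian src tgt w =
     incidence src tgt ** (\<chi> a b. if a = b then w a else 0) ** transpose (incidence src tgt)"

definition graph_connected :: "('m \<Rightarrow> 'n) \<Rightarrow> ('m \<Rightarrow> 'n) \<Rightarrow> bool" where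
  "graph_connected src tgt \<longleftrightarrow>
     (\<forall>u v. (u, v) \<in> ({(src e, tgt e) | e. True} \<union> {(tgt e, src e) | e. True})\<^sup>*)"

definition pinv :: "real ^ 'n ^ 'n \<Rightarrow> real ^ 'n ^ 'n" where
  "pinv A = (THE X. A ** X ** A = A \<and> X ** A ** X = X \<and>
                    transpose (A ** X) = A ** X \<and> transpose (X ** A) = X ** A)"

definition port_vector :: "'n::finite \<Rightarrow> 'n \<Rightarrow> real ^ 'n" where
  "port_vector i j = axis i 1 - axis j 1"

definition eff_resistance :: "real ^ 'n ^ 'n \<Rightarrow> 'n::finite \<Rightarrow> 'n \<Rightarrow> real" where
  "eff_resistance L i j = port_vector i j \<bullet> (pinv L *v port_vector i j)"

definition transfer_fn :: "real ^ 'n ^ 'n \<Rightarrow> real ^ 'n \<Rightarrow> complex \<Rightarrow> complex" where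
  "transfer_fn L E s =
     (let Ec = (\<chi> k. complex_of_real (E $ k));
          M = matrix_inv ((\<chi> a b. (if a = b then s else 0) + complex_of_real (L $ a $ b)))
      in \<Sum>k\<in>UNIV. Ec $ k * (M *v Ec) $ k)"

text \<open>The frequency \<omega> = 0 is excluded since sI + L is singular at s = 0
  (the removable singularity does not affect the supremum).\<close>
definition hinf_gain :: "real ^ 'n ^ 'n \<Rightarrow> real ^ 'n \<Rightarrow> real" where
  "hinf_gain L E = Sup {cmod (transfer_fn L E (\<i> * complex_of_real \<omega>)) | \<omega>. \<omega> \<noteq> 0}"

end

theory Submission
  imports Defs
begin

(*
  For w <> 0 write (iw I + L)^-1 E = a + i b, i.e. L a - w b = E and L b + w a = 0, so that
  G(iw) = E.a + i E.b; pairing the two equations with a and b gives E.a = a.La + b.Lb.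
  Let R = E.L^+E. Since E is orthogonal to the constants, E = L(L^+E), and Cauchy-Schwarz
  for the semi-inner product x.Ly gives |G(iw)|^2 <= R (E.a) <= R |G(iw)|, hence |G(iw)| <= R.
  Conversely R = E.a + w^2 (a.L^+a + b.L^+b), and L^+ <= C L on the complement of the
  constants, so R <= |G(iw)| (1 + C w^2); letting w -> 0 shows that the supremum is R.
  Connectivity enters only through L^+ = (L + J)^-1 - J with J the averaging matrix:
  the kernel of L consists of the constants, which makes L + J invertible.
*)

lemma penrose_conditions_unique:
  fixes A :: "real^'n^'m" and X Y :: "real^'m^'n"
  assumes x1: "A ** X ** A = A" and x2: "X ** A ** X = X"
    and x3: "transpose (A ** X) = A ** X" and x4: "transpose (X ** A) = X ** A"
    and y1: "A ** Y ** A = A" and y2: "Y ** A ** Y = Y"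
    and y3: "transpose (A ** Y) = A ** Y" and y4: "transpose (Y ** A) = Y ** A"
  shows "X = Y"
proof -
  have At_AY: "transpose A = transpose A ** (A ** Y)"
    by (metis y1 y3 matrix_transpose_mul)
  have At_XA: "transpose A = (X ** A) ** transpose A"
    by (metis x1 x4 matrix_transpose_mul matrix_mul_assoc)
  have "X = X ** transpose (A ** X)" using x2 x3 by (simp add: matrix_mul_assoc)
  also have "\<dots> = X ** transpose X ** transpose A"
    by (simp add: matrix_transpose_mul matrix_mul_assoc)
  also have "\<dots> = X ** transpose X ** (transpose A ** (A ** Y))"
    by (subst At_AY) (rule refl)
  also have "\<dots> = X ** A ** Y"
    by (metis x2 x3 matrix_transpose_mul matrix_mul_assoc)
  finally have X_eq: "X = X ** A ** Y" .
  have "Y = transpose (Y ** A) ** Y" using y2 y4 by simp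
  also have "\<dots> = ((X ** A) ** transpose A) ** transpose Y ** Y"
    by (subst At_XA[symmetric]) (simp add: matrix_transpose_mul)
  also have "\<dots> = X ** A ** Y"
    by (metis y2 y4 matrix_transpose_mul matrix_mul_assoc)
  finally show ?thesis using X_eq by simp
qed

lemma pinv_eqI:
  fixes A X :: "real^'n^'n"
  assumes "A ** X ** A = A" and "X ** A ** X = X"
    and "transpose (A ** X) = A ** X" and "transpose (X ** A) = X ** A"
  shows "pinv A = X"
  unfolding pinv_def
  by (rule the_equality) (use assms penrose_conditions_unique in blast)+

lemma matrix_add_rdistrib: "(A + B) ** C = A ** C + B ** C"
  by (vector matrix_matrix_mult_def sum.distrib[symmetric] field_simps)

lemma matrix_diff_ldistrib:
  fixes A :: "'a::ring_1^'n^'m"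
  shows "A ** (B - C) = A ** B - A ** C"
  by (vector matrix_matrix_mult_def sum_subtractf[symmetric] field_simps)

lemma matrix_diff_rdistrib:
  fixes A :: "'a::ring_1^'n^'m"
  shows "(A - B) ** C = A ** C - B ** C"
  by (vector matrix_matrix_mult_def sum_subtractf[symmetric] field_simps)

lemma transpose_diff: "transpose (A - B) = transpose A - transpose B"
  by (simp add: transpose_def vec_eq_iff)

lemma invertible_matrix_inv:
  assumes "invertible A"
  shows "A ** matrix_inv A = mat 1" and "matrix_inv A ** A = mat 1"
  using someI_ex[OF assms[unfolded invertible_def]] by (simp_all add: matrix_inv_def)

lemma pinv_via_complementary_projection:
  fixes L J :: "real^'n^'n"
  assumes J_sym: "transpose J = J" and J_idem: "J ** J = J"
    and LJ: "L ** J = 0" and JL: "J ** L = 0" and inv: "invertible (L + J)"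
  shows "pinv L = matrix_inv (L + J) - J"
    and "L ** pinv L = mat 1 - J" and "pinv L ** L = mat 1 - J"
proof -
  define K where "K = matrix_inv (L + J)"
  have right_inv: "(L + J) ** K = mat 1" and left_inv: "K ** (L + J) = mat 1"
    using invertible_matrix_inv[OF inv] by (simp_all add: K_def)
  have KJ: "K ** J = J"
    by (metis left_inv J_idem LJ matrix_add_ldistrib matrix_add_rdistrib matrix_mul_assoc
        matrix_mul_lid add_0)
  have JK: "J ** K = J"
    by (metis right_inv J_idem JL matrix_add_ldistrib matrix_add_rdistrib matrix_mul_assoc
        matrix_mul_rid add_0)
  have LK: "L ** K = mat 1 - J"
    using right_inv JK by (simp add: matrix_add_rdistrib eq_diff_eq)
  have KL: "K ** L = mat 1 - J"
    using left_inv KJ by (simp add: matrix_add_ldistrib eq_diff_eq)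
  define X where "X = K - J"
  have LX: "L ** X = mat 1 - J" by (simp add: X_def matrix_diff_ldistrib LK LJ)
  have XL: "X ** L = mat 1 - J" by (simp add: X_def matrix_diff_rdistrib KL JL)
  have pinv: "pinv L = X"
  proof (rule pinv_eqI)
    show "L ** X ** L = L" by (simp add: LX matrix_diff_rdistrib JL)
    show "X ** L ** X = X"
      unfolding XL by (simp add: X_def matrix_diff_rdistrib matrix_diff_ldistrib JK J_idem)
  qed (simp_all add: LX XL transpose_diff J_sym)
  then show "pinv L = matrix_inv (L + J) - J" by (simp add: X_def K_def)
  show "L ** pinv L = mat 1 - J" "pinv L ** L = mat 1 - J" by (simp_all add: pinv LX XL)
qed

definition averaging_matrix :: "real^'n^'n" where
  "averaging_matrix = (\<chi> a b. 1 / real CARD('n))"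

lemma inner_one_one: "(1::real^'n) \<bullet> 1 = real CARD('n)"
  by (simp add: inner_vec_def)

lemma averaging_matrix_mult:
  fixes v :: "real^'n"
  shows "averaging_matrix *v v = ((1 \<bullet> v) / real CARD('n)) *\<^sub>R 1"
  by (simp add: averaging_matrix_def vec_eq_iff matrix_vector_mult_def inner_vec_def
      sum_divide_distrib)

lemma transpose_averaging_matrix: "transpose averaging_matrix = averaging_matrix"
  by (simp add: averaging_matrix_def transpose_def)

lemma averaging_matrix_idem: "averaging_matrix ** averaging_matrix = averaging_matrix"
  by (simp add: matrix_eq matrix_vector_mul_assoc[symmetric] averaging_matrix_mult
      inner_one_one)

definition shift_matrix :: "complex \<Rightarrow> real^'n^'n \<Rightarrow> complex^'n^'n" where
  "shift_matrix s A = (\<chi> a b. (if a = b then s else 0) + complex_of_real (A $ a $ b))"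

definition Re_vec :: "complex^'n \<Rightarrow> real^'n" where "Re_vec z = (\<chi> k. Re (z $ k))"
definition Im_vec :: "complex^'n \<Rightarrow> real^'n" where "Im_vec z = (\<chi> k. Im (z $ k))"

lemma complex_vec_eq_iff: "z = z' \<longleftrightarrow> Re_vec z = Re_vec z' \<and> Im_vec z = Im_vec z'"
  by (auto simp: Re_vec_def Im_vec_def vec_eq_iff complex_eq_iff)

lemma Re_vec_0 [simp]: "Re_vec 0 = 0" and Im_vec_0 [simp]: "Im_vec 0 = 0"
  by (simp_all add: Re_vec_def Im_vec_def vec_eq_iff)

lemma shift_matrix_mult_component:
  "(shift_matrix s A *v z) $ k = s * z $ k + (\<Sum>l\<in>UNIV. complex_of_real (A $ k $ l) * z $ l)"
proof -
  have "(shift_matrix s A *v z) $ k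
      = (\<Sum>l\<in>UNIV. (if k = l then s * z $ l else 0) + complex_of_real (A $ k $ l) * z $ l)"
    unfolding shift_matrix_def matrix_vector_mult_def vec_lambda_beta
    by (intro sum.cong refl) (simp add: distrib_right)
  then show ?thesis by (simp add: sum.distrib)
qed

lemma Re_vec_shift_matrix_imaginary:
  "Re_vec (shift_matrix (\<i> * of_real \<omega>) A *v z) = A *v Re_vec z - \<omega> *\<^sub>R Im_vec z"
  unfolding vec_eq_iff Re_vec_def Im_vec_def vec_lambda_beta shift_matrix_mult_component
  by (simp add: matrix_vector_mult_def Re_sum)

lemma Im_vec_shift_matrix_imaginary:
  "Im_vec (shift_matrix (\<i> * of_real \<omega>) A *v z) = A *v Im_vec z + \<omega> *\<^sub>R Re_vec z"
  unfolding vec_eq_iff Re_vec_def Im_vec_def vec_lambda_beta shift_matrix_mult_component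
  by (simp add: matrix_vector_mult_def Im_sum)

lemma resolvent_energy_identity:
  fixes A :: "real^'n^'n"
  assumes "A *v a - \<omega> *\<^sub>R b = E" and "A *v b + \<omega> *\<^sub>R a = 0"
  shows "E \<bullet> a = a \<bullet> (A *v a) + b \<bullet> (A *v b)"
proof -
  have "E \<bullet> a = a \<bullet> (A *v a) - \<omega> * (a \<bullet> b)"
    unfolding assms(1)[symmetric] by (simp add: inner_diff_left inner_diff_right inner_commute[of _ a])
  moreover have "0 = b \<bullet> (A *v b) + \<omega> * (a \<bullet> b)"
    using arg_cong[OF assms(2), of "\<lambda>v. b \<bullet> v"] by (simp add: inner_add_right inner_commute)
  ultimately show ?thesis by linarith
qed

lemma Sup_eq_of_bounds_near_zero:
  fixes f :: "real \<Rightarrow> real"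
  assumes C: "C \<ge> 0"
    and upper: "\<And>\<omega>. \<omega> \<noteq> 0 \<Longrightarrow> f \<omega> \<le> R"
    and lower: "\<And>\<omega>. \<omega> \<noteq> 0 \<Longrightarrow> R \<le> f \<omega> * (1 + \<omega>\<^sup>2 * C)"
  shows "Sup {f \<omega> | \<omega>. \<omega> \<noteq> 0} = R"
proof (rule cSup_eq_non_empty)
  show "{f \<omega> | \<omega>. \<omega> \<noteq> 0} \<noteq> {}" by auto
  show "\<And>x. x \<in> {f \<omega> | \<omega>. \<omega> \<noteq> 0} \<Longrightarrow> x \<le> R" using upper by blast
next
  fix y assume y: "\<And>x. x \<in> {f \<omega> | \<omega>. \<omega> \<noteq> 0} \<Longrightarrow> x \<le> y"
  have "R \<le> y * (1 + \<omega>\<^sup>2 * C)" if "\<omega> \<noteq> 0" for \<omega>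
  proof -
    have "f \<omega> \<le> y" using y that by blast
    then have "f \<omega> * (1 + \<omega>\<^sup>2 * C) \<le> y * (1 + \<omega>\<^sup>2 * C)"
      using C by (intro mult_right_mono) auto
    then show ?thesis using lower[OF that] by linarith
  qed
  then have "\<forall>\<^sub>F \<omega> in at 0. R \<le> y * (1 + \<omega>\<^sup>2 * C)"
    by (auto simp: eventually_at_filter)
  moreover have "((\<lambda>\<omega>. y * (1 + \<omega>\<^sup>2 * C)) \<longlongrightarrow> y * (1 + 0\<^sup>2 * C)) (at (0::real))"
    by (intro tendsto_intros)
  ultimately show "R \<le> y"
    by (intro tendsto_lowerbound) auto
qed

locale graph_laplacian =
  fixes src tgt :: "'m::finite \<Rightarrow> 'n::finite" and w :: "'m \<Rightarrow> real"
  assumes no_loops: "\<And>e. src e \<noteq> tgt e"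
    and pos: "\<And>e. w e > 0"
begin

abbreviation "B \<equiv> incidence src tgt"
abbreviation "L \<equiv> weighted_laplacian src tgt w"

definition grad :: "real^'n \<Rightarrow> real^'m" where
  "grad x = (\<chi> e. sqrt (w e) * (x $ src e - x $ tgt e))"

lemma vector_incidence_component: "(y v* B) $ e = y $ src e - y $ tgt e"
proof -
  have "(y v* B) $ e = (\<Sum>a\<in>UNIV. (if a = src e then y $ a else 0) + (if a = tgt e then - y $ a else 0))"
    unfolding vector_matrix_mult_def incidence_def vec_lambda_beta
    by (intro sum.cong) (use no_loops[of e] in auto)
  then show ?thesis by (simp add: sum.distrib)
qed

lemma inner_laplacian: "x \<bullet> (L *v y) = grad x \<bullet> grad y"
proof -
  let ?W = "\<chi> a b. if a = b then w a else 0 :: real^'m^'m"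
  have "x \<bullet> (L *v y) = (x v* B) \<bullet> (?W *v (y v* B))"
    unfolding weighted_laplacian_def
    by (simp add: dot_lmul_matrix matrix_vector_mul_assoc[symmetric])
  also have "\<dots> = (\<Sum>e\<in>UNIV. w e * (x $ src e - x $ tgt e) * (y $ src e - y $ tgt e))"
    by (simp add: inner_vec_def matrix_vector_mult_def vector_incidence_component
        if_distrib if_distribR mult.commute mult.left_commute cong: if_cong)
  also have "\<dots> = grad x \<bullet> grad y"
    unfolding inner_vec_def inner_real_def grad_def vec_lambda_beta
  proof (intro sum.cong refl)
    fix e
    have "sqrt (w e) * sqrt (w e) = w e" using pos[of e] by simp
    then show "w e * (x $ src e - x $ tgt e) * (y $ src e - y $ tgt e)
      = sqrt (w e) * (x $ src e - x $ tgt e) * (sqrt (w e) * (y $ src e - y $ tgt e))"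
      by (metis mult.commute mult.left_commute)
  qed
  finally show ?thesis .
qed

lemma laplacian_inner_commute: "x \<bullet> (L *v y) = y \<bullet> (L *v x)"
  by (simp add: inner_laplacian inner_commute)

lemma laplacian_psd: "0 \<le> x \<bullet> (L *v x)"
  by (simp add: inner_laplacian)

lemma laplacian_cauchy_schwarz: "(x \<bullet> (L *v y))\<^sup>2 \<le> (x \<bullet> (L *v x)) * (y \<bullet> (L *v y))"
  unfolding inner_laplacian by (rule Cauchy_Schwarz_ineq)

lemma grad_eq_0_iff: "grad x = 0 \<longleftrightarrow> (\<forall>e. x $ src e = x $ tgt e)"
  using pos by (auto simp: grad_def vec_eq_iff less_imp_neq[symmetric])

lemma quadratic_form_eq_0_iff: "x \<bullet> (L *v x) = 0 \<longleftrightarrow> grad x = 0"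
  by (simp add: inner_laplacian)

lemma laplacian_mult_eq_0_iff: "L *v x = 0 \<longleftrightarrow> grad x = 0"
proof
  assume "grad x = 0"
  then have "(L *v x) \<bullet> (L *v x) = 0" by (simp add: inner_laplacian)
  then show "L *v x = 0" by simp
qed (metis inner_zero_right quadratic_form_eq_0_iff)

lemma laplacian_one: "L *v 1 = 0"
  by (simp add: laplacian_mult_eq_0_iff grad_eq_0_iff)

lemma one_inner_laplacian: "1 \<bullet> (L *v y) = 0"
  using inner_laplacian[of 1 y] inner_laplacian[of y 1] laplacian_one
  by (simp add: inner_commute)

lemma laplacian_averaging_matrix: "L ** averaging_matrix = 0"
  by (simp add: matrix_eq matrix_vector_mul_assoc[symmetric] averaging_matrix_mult
      matrix_vector_mult_scaleR laplacian_one)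

lemma averaging_matrix_laplacian: "averaging_matrix ** L = 0"
  by (simp add: matrix_eq matrix_vector_mul_assoc[symmetric] averaging_matrix_mult
      one_inner_laplacian)

lemma shift_matrix_invertible:
  assumes "\<omega> \<noteq> 0"
  shows "invertible (shift_matrix (\<i> * of_real \<omega>) L)"
  unfolding invertible_left_inverse matrix_left_invertible_ker
proof (intro allI impI)
  fix z assume z: "shift_matrix (\<i> * of_real \<omega>) L *v z = 0"
  define a b where "a = Re_vec z" and "b = Im_vec z"
  have ab: "L *v a - \<omega> *\<^sub>R b = 0" "L *v b + \<omega> *\<^sub>R a = 0"
    using arg_cong[OF z, of Re_vec] arg_cong[OF z, of Im_vec]
    by (simp_all add: a_def b_def Re_vec_shift_matrix_imaginary Im_vec_shift_matrix_imaginary)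
  have "a \<bullet> (L *v a) + b \<bullet> (L *v b) = 0"
    using resolvent_energy_identity[OF ab] by simp
  then have "L *v a = 0" "L *v b = 0"
    using laplacian_psd[of a] laplacian_psd[of b]
    by (simp_all add: laplacian_mult_eq_0_iff flip: quadratic_form_eq_0_iff)
  then have "a = 0" "b = 0" using ab assms by simp_all
  then show "z = 0"
    by (simp add: complex_vec_eq_iff a_def b_def)
qed

lemma transfer_fn_imaginary_axis:
  assumes "\<omega> \<noteq> 0"
  obtains a b where "L *v a - \<omega> *\<^sub>R b = E" and "L *v b + \<omega> *\<^sub>R a = 0"
    and "transfer_fn L E (\<i> * of_real \<omega>) = Complex (E \<bullet> a) (E \<bullet> b)"
proof
  define M where "M = shift_matrix (\<i> * of_real \<omega>) L"
  define Ec :: "complex^'n" where "Ec = (\<chi> k. complex_of_real (E $ k))"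
  define z where "z = matrix_inv M *v Ec"
  have Ec: "Re_vec Ec = E" "Im_vec Ec = 0"
    by (simp_all add: Re_vec_def Im_vec_def Ec_def vec_eq_iff)
  have Mz: "M *v z = Ec"
    using invertible_matrix_inv(1)[OF shift_matrix_invertible[OF assms]]
    by (simp add: z_def M_def matrix_vector_mul_assoc)
  show "L *v Re_vec z - \<omega> *\<^sub>R Im_vec z = E" "L *v Im_vec z + \<omega> *\<^sub>R Re_vec z = 0"
    using arg_cong[OF Mz, of Re_vec] arg_cong[OF Mz, of Im_vec]
    by (simp_all add: M_def Re_vec_shift_matrix_imaginary Im_vec_shift_matrix_imaginary Ec)
  have "transfer_fn L E (\<i> * of_real \<omega>) = (\<Sum>k\<in>UNIV. Ec $ k * z $ k)"
    by (simp add: transfer_fn_def Let_def shift_matrix_def[symmetric] M_def z_def Ec_def)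
  also have "\<dots> = Complex (E \<bullet> Re_vec z) (E \<bullet> Im_vec z)"
    by (simp add: complex_eq_iff Ec_def inner_vec_def Re_vec_def Im_vec_def Re_sum Im_sum)
  finally show "transfer_fn L E (\<i> * of_real \<omega>) = Complex (E \<bullet> Re_vec z) (E \<bullet> Im_vec z)" .
qed

end

locale connected_graph_laplacian = graph_laplacian src tgt w
  for src tgt :: "'m::finite \<Rightarrow> 'n::finite" and w +
  assumes conn: "graph_connected src tgt"
begin

lemma laplacian_kernel_constant:
  assumes "L *v x = 0"
  shows "x $ u = x $ v"
proof -
  have edge: "x $ src e = x $ tgt e" for e
    using assms by (simp add: laplacian_mult_eq_0_iff grad_eq_0_iff)
  have "(u, v) \<in> ({(src e, tgt e) | e. True} \<union> {(tgt e, src e) | e. True})\<^sup>*"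
    using conn by (simp add: graph_connected_def)
  then show ?thesis
    by (induction rule: rtrancl_induct) (auto simp: edge)
qed

lemma invertible_laplacian_plus_averaging: "invertible (L + averaging_matrix)"
  unfolding invertible_left_inverse matrix_left_invertible_ker
proof (intro allI impI)
  fix x assume x: "(L + averaging_matrix) *v x = 0"
  have "1 \<bullet> x = 0"
    using arg_cong[OF x, of "\<lambda>v. 1 \<bullet> v"]
    by (simp add: matrix_vector_mult_add_rdistrib inner_add_right one_inner_laplacian
        averaging_matrix_mult inner_one_one)
  then have "L *v x = 0"
    using x by (simp add: matrix_vector_mult_add_rdistrib averaging_matrix_mult)
  then have x_const: "x = (x $ u) *\<^sub>R 1" for u
    using laplacian_kernel_constant by (simp add: vec_eq_iff)
  have "x $ u = 0" for u
  proof -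
    have "0 = 1 \<bullet> ((x $ u) *\<^sub>R (1::real^'n))"
      using \<open>1 \<bullet> x = 0\<close> x_const[of u] by simp
    also have "\<dots> = x $ u * real CARD('n)"
      by (simp add: inner_one_one)
    finally show ?thesis by simp
  qed
  then show "x = 0"
    using x_const by simp
qed

lemmas pinv_laplacian =
  pinv_via_complementary_projection[OF transpose_averaging_matrix averaging_matrix_idem
    laplacian_averaging_matrix averaging_matrix_laplacian invertible_laplacian_plus_averaging]

lemma laplacian_pinv_mult: "1 \<bullet> u = 0 \<Longrightarrow> L *v (pinv L *v u) = u"
  by (simp add: matrix_vector_mul_assoc pinv_laplacian(2) matrix_vector_mult_diff_rdistrib
      averaging_matrix_mult)

lemma pinv_laplacian_mult: "1 \<bullet> u = 0 \<Longrightarrow> pinv L *v (L *v u) = u"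
  by (simp add: matrix_vector_mul_assoc pinv_laplacian(3) matrix_vector_mult_diff_rdistrib
      averaging_matrix_mult)

lemma pinv_quadratic_form_eq:
  "1 \<bullet> u = 0 \<Longrightarrow> u \<bullet> (pinv L *v u) = (pinv L *v u) \<bullet> (L *v (pinv L *v u))"
  by (simp add: laplacian_pinv_mult inner_commute)

lemma pinv_quadratic_form_le_laplacian:
  obtains C where "C \<ge> 0" and "\<And>u. 1 \<bullet> u = 0 \<Longrightarrow> u \<bullet> (pinv L *v u) \<le> C * (u \<bullet> (L *v u))"
proof -
  obtain K where K: "\<And>x. norm (pinv L *v x) \<le> norm x * K"
    using bounded_linear.bounded[OF matrix_vector_mul_bounded_linear] by blast
  define k where "k = max K 0"
  \<comment> \<open>Cauchy-Schwarz applied to \<open>u = L (L\<^sup>+ u)\<close> gives \<open>|u|\<^sup>2 \<le> k (u\<bullet>Lu)\<close>,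
    while \<open>u\<bullet>L\<^sup>+u \<le> k |u|\<^sup>2\<close>.\<close>
  have "u \<bullet> (pinv L *v u) \<le> k\<^sup>2 * (u \<bullet> (L *v u))" if u: "1 \<bullet> u = 0" for u
  proof -
    define r where "r = u \<bullet> (pinv L *v u)"
    define p where "p = u \<bullet> (L *v u)"
    have "r \<le> norm u * norm (pinv L *v u)" unfolding r_def by (rule norm_cauchy_schwarz)
    also have "\<dots> \<le> norm u * (norm u * k)"
    proof (rule mult_left_mono)
      show "norm (pinv L *v u) \<le> norm u * k"
        using K[of u] by (metis k_def max.cobounded1 mult_left_mono norm_ge_zero order_trans)
    qed simp
    also have "\<dots> = k * (u \<bullet> u)"
      by (simp add: power2_norm_eq_inner[symmetric] power2_eq_square)
    finally have r_le: "r \<le> k * (u \<bullet> u)" .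
    have "(u \<bullet> u)\<^sup>2 = ((pinv L *v u) \<bullet> (L *v u))\<^sup>2"
      using u by (simp add: laplacian_inner_commute[of "pinv L *v u" u] laplacian_pinv_mult)
    also have "\<dots> \<le> r * p"
      using laplacian_cauchy_schwarz pinv_quadratic_form_eq[OF u] by (simp add: r_def p_def)
    also have "\<dots> \<le> k * (u \<bullet> u) * p"
      using r_le laplacian_psd by (simp add: p_def mult_right_mono)
    finally have "(u \<bullet> u) * (u \<bullet> u) \<le> (k * p) * (u \<bullet> u)"
      by (simp add: power2_eq_square mult_ac)
    then have "u \<bullet> u \<le> k * p"
      using laplacian_psd[of u] by (cases "u \<bullet> u = 0") (simp_all add: p_def k_def)
    then have "k * (u \<bullet> u) \<le> k * (k * p)"
      by (rule mult_left_mono) (simp add: k_def)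
    then have "k * (u \<bullet> u) \<le> k\<^sup>2 * p"
      by (simp add: power2_eq_square mult.assoc)
    with r_le show ?thesis by (simp add: r_def p_def)
  qed
  then show ?thesis using that[of "k\<^sup>2"] by simp
qed

lemma resolvent_norm_sq_le:
  assumes E: "1 \<bullet> E = 0"
    and ab: "L *v a - \<omega> *\<^sub>R b = E" "L *v b + \<omega> *\<^sub>R a = 0"
  shows "(E \<bullet> a)\<^sup>2 + (E \<bullet> b)\<^sup>2 \<le> (E \<bullet> (pinv L *v E)) * (E \<bullet> a)"
proof -
  define x where "x = pinv L *v E"
  have Lx: "L *v x = E" unfolding x_def using laplacian_pinv_mult[OF E] .
  have R: "E \<bullet> x = x \<bullet> (L *v x)" by (simp add: Lx inner_commute)
  have "E \<bullet> v = x \<bullet> (L *v v)" for v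
    by (simp add: laplacian_inner_commute[of x v] Lx inner_commute)
  then have "(E \<bullet> a)\<^sup>2 \<le> (E \<bullet> x) * (a \<bullet> (L *v a))" "(E \<bullet> b)\<^sup>2 \<le> (E \<bullet> x) * (b \<bullet> (L *v b))"
    unfolding R by (simp_all add: laplacian_cauchy_schwarz)
  moreover have "E \<bullet> a = a \<bullet> (L *v a) + b \<bullet> (L *v b)"
    by (rule resolvent_energy_identity[OF ab])
  ultimately show ?thesis
    unfolding x_def[symmetric] by (simp add: distrib_left)
qed

lemma resistance_form_le_resolvent:
  assumes E: "1 \<bullet> E = 0" and \<omega>: "\<omega> \<noteq> 0"
    and ab: "L *v a - \<omega> *\<^sub>R b = E" "L *v b + \<omega> *\<^sub>R a = 0"
    and C: "\<And>u. 1 \<bullet> u = 0 \<Longrightarrow> u \<bullet> (pinv L *v u) \<le> C * (u \<bullet> (L *v u))"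
  shows "E \<bullet> (pinv L *v E) \<le> (E \<bullet> a) * (1 + \<omega>\<^sup>2 * C)"
proof -
  let ?X = "pinv L"
  have b: "1 \<bullet> b = 0"
    using arg_cong[OF ab(1), of "\<lambda>v. 1 \<bullet> v"] E \<omega> by (simp add: inner_diff_right one_inner_laplacian)
  have a: "1 \<bullet> a = 0"
    using arg_cong[OF ab(2), of "\<lambda>v. 1 \<bullet> v"] \<omega> by (simp add: inner_add_right one_inner_laplacian)
  have Xa: "b = - \<omega> *\<^sub>R (?X *v a)"
    using arg_cong[OF ab(2), of "\<lambda>v. ?X *v v"]
    by (simp add: matrix_vector_right_distrib matrix_vector_mult_scaleR pinv_laplacian_mult[OF b]
        eq_neg_iff_add_eq_0)
  have XE: "?X *v E = a - \<omega> *\<^sub>R (?X *v b)"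
    using arg_cong[OF ab(1), of "\<lambda>v. ?X *v v"]
    by (simp add: matrix_vector_mult_diff_distrib matrix_vector_mult_scaleR pinv_laplacian_mult[OF a])
  have "E \<bullet> (?X *v b) = a \<bullet> b - \<omega> * (b \<bullet> (?X *v b))"
    unfolding ab(1)[symmetric]
    by (simp add: inner_diff_left inner_commute[of "L *v a"]
        laplacian_inner_commute[of "?X *v b" a] laplacian_pinv_mult[OF b])
  moreover have "a \<bullet> b = - \<omega> * (a \<bullet> (?X *v a))"
    by (subst Xa) simp
  ultimately have Eb: "E \<bullet> (?X *v b) = - \<omega> * (a \<bullet> (?X *v a)) - \<omega> * (b \<bullet> (?X *v b))"
    by simp
  have R: "E \<bullet> (?X *v E) = E \<bullet> a + \<omega>\<^sup>2 * (a \<bullet> (?X *v a) + b \<bullet> (?X *v b))"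
    by (simp add: XE inner_diff_right Eb power2_eq_square algebra_simps)
  have "a \<bullet> (?X *v a) + b \<bullet> (?X *v b) \<le> C * (a \<bullet> (L *v a) + b \<bullet> (L *v b))"
    using C[OF a] C[OF b] by (simp add: distrib_left)
  also have "\<dots> = C * (E \<bullet> a)"
    using resolvent_energy_identity[OF ab] by simp
  finally have "\<omega>\<^sup>2 * (a \<bullet> (?X *v a) + b \<bullet> (?X *v b)) \<le> \<omega>\<^sup>2 * (C * (E \<bullet> a))"
    by (rule mult_left_mono) simp
  then show ?thesis
    unfolding R by (simp add: algebra_simps)
qed

lemma resistance_form_nonneg: "1 \<bullet> E = 0 \<Longrightarrow> 0 \<le> E \<bullet> (pinv L *v E)"
  using laplacian_psd by (simp add: pinv_quadratic_form_eq)

lemma norm_transfer_fn_le_resistance_form: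
  assumes E: "1 \<bullet> E = 0" and \<omega>: "\<omega> \<noteq> 0"
  shows "cmod (transfer_fn L E (\<i> * of_real \<omega>)) \<le> E \<bullet> (pinv L *v E)"
proof -
  obtain a b where ab: "L *v a - \<omega> *\<^sub>R b = E" "L *v b + \<omega> *\<^sub>R a = 0"
    and G: "transfer_fn L E (\<i> * of_real \<omega>) = Complex (E \<bullet> a) (E \<bullet> b)"
    using transfer_fn_imaginary_axis[OF \<omega>] .
  define g where "g = cmod (Complex (E \<bullet> a) (E \<bullet> b))"
  define R where "R = E \<bullet> (pinv L *v E)"
  have "g * g = (E \<bullet> a)\<^sup>2 + (E \<bullet> b)\<^sup>2"
    by (simp add: g_def cmod_def power2_eq_square)
  also have "\<dots> \<le> R * (E \<bullet> a)"
    unfolding R_def by (rule resolvent_norm_sq_le[OF E ab])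
  also have "\<dots> \<le> R * g"
    using complex_Re_le_cmod[of "Complex (E \<bullet> a) (E \<bullet> b)"] resistance_form_nonneg[OF E]
    by (simp add: g_def R_def mult_left_mono)
  finally have "g \<le> R"
    using resistance_form_nonneg[OF E] by (cases "g = 0") (simp_all add: g_def R_def)
  then show ?thesis by (simp add: G g_def R_def)
qed

lemma resistance_form_le_norm_transfer_fn:
  assumes E: "1 \<bullet> E = 0" and \<omega>: "\<omega> \<noteq> 0" and "C \<ge> 0"
    and C: "\<And>u. 1 \<bullet> u = 0 \<Longrightarrow> u \<bullet> (pinv L *v u) \<le> C * (u \<bullet> (L *v u))"
  shows "E \<bullet> (pinv L *v E) \<le> cmod (transfer_fn L E (\<i> * of_real \<omega>)) * (1 + \<omega>\<^sup>2 * C)"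
proof -
  obtain a b where ab: "L *v a - \<omega> *\<^sub>R b = E" "L *v b + \<omega> *\<^sub>R a = 0"
    and G: "transfer_fn L E (\<i> * of_real \<omega>) = Complex (E \<bullet> a) (E \<bullet> b)"
    using transfer_fn_imaginary_axis[OF \<omega>] .
  have "E \<bullet> (pinv L *v E) \<le> (E \<bullet> a) * (1 + \<omega>\<^sup>2 * C)"
    by (rule resistance_form_le_resolvent[OF E \<omega> ab C])
  also have "\<dots> \<le> cmod (transfer_fn L E (\<i> * of_real \<omega>)) * (1 + \<omega>\<^sup>2 * C)"
    using complex_Re_le_cmod[of "Complex (E \<bullet> a) (E \<bullet> b)"] \<open>C \<ge> 0\<close>
    by (intro mult_right_mono) (simp_all add: G)
  finally show ?thesis .
qed

lemma hinf_gain_eq_resistance_form: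
  assumes E: "1 \<bullet> E = 0"
  shows "hinf_gain L E = E \<bullet> (pinv L *v E)"
proof -
  obtain C where "C \<ge> 0" and C: "\<And>u. 1 \<bullet> u = 0 \<Longrightarrow> u \<bullet> (pinv L *v u) \<le> C * (u \<bullet> (L *v u))"
    using pinv_quadratic_form_le_laplacian by blast
  show ?thesis
    unfolding hinf_gain_def
    using norm_transfer_fn_le_resistance_form[OF E]
      resistance_form_le_norm_transfer_fn[OF E _ \<open>C \<ge> 0\<close> C]
    by (intro Sup_eq_of_bounds_near_zero[OF \<open>C \<ge> 0\<close>]) auto
qed

end

theorem theorem3:
  fixes src tgt :: "'m::finite \<Rightarrow> 'n::finite" and w :: "'m \<Rightarrow> real" and i j :: 'n
  assumes no_loops: "\<And>e. src e \<noteq> tgt e"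
    and pos: "\<And>e. w e > 0"
    and conn: "graph_connected src tgt"
    and ij: "i \<noteq> j"
  shows "hinf_gain (weighted_laplacian src tgt w) (port_vector i j)
           = eff_resistance (weighted_laplacian src tgt w) i j"
proof -
  interpret connected_graph_laplacian src tgt w
    using no_loops pos conn by unfold_locales
  have "1 \<bullet> port_vector i j = 0"
    by (simp add: port_vector_def inner_diff_right inner_axis)
  then show ?thesis
    by (simp add: hinf_gain_eq_resistance_form eff_resistance_def)
qed

end
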